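(* Fix $p\in[0,1]$ and let $(G_n)$ be a sequence of graphs with $\min_{u\in V}\delta_u=\omega(\log n)$. For each $n$ and $k$, run the $(k,p,\mathcal B)$-Edge-Majority dynamics on $G_n$ from the configuration in which every node is $\mathcal R$, and let $\mathbf P_k$ denote its law. For every $\gamma>0$ there exists $H=H(p,\gamma)$ such that: (Fast disruption) if $p>1/2$, then for all $k>H$, $\mathbf P_k\big(\mathrm{vol}(B^{(1)})/\mathrm{vol}(V)\ge1-\gamma\big)=1-o(1)$; (Slow disruption) if $p<1/2$, then for all $k>H$ and $K>0$, $\mathbf P_k\big(\forall t\in[0,n^K]:\ \mathrm{vol}(R^{(t)})/\mathrm{vol}(V)\ge1-\gamma\big)=1-o(1)$.
   Context: $G_n=(V,E)$, $V=\{1,\dots,n\}$, $N(u)$ neighbourhood, $\delta_u=|N(u)|$, $\mathrm{vol}(S)=\sum_{v\in S}\delta_v$; $o(1)$ refers to $n\to\infty$ for fixed $k$. States in $\{\mathcal R,\mathcal B\}$; $R^{(t)},B^{(t)}$ are the sets of nodes in each state at round $t$. $(k,p,\mathcal B)$-Edge-Majority: in each round $t\ge1$ every node $u$ independently samples $k$ neighbours uniformly at random with replacement; for each sampled $v$, independently, $u$ sees $v$ as $\mathcal B$ with probability $p$ and otherwise sees $v$'s true state at round $t-1$; $u$ adopts the state seen more often, ties broken uniformly at random. *)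

theory Defs
  imports "HOL-Probability.Probability"
begin

text \<open>Configurations: a node is in state B iff the configuration maps it to True,
  and in state R iff it maps it to False. Vertex set of G_n is {1..n}.
  A graph sequence is E :: nat => nat => nat => bool, with G_n having edge relation E n.\<close>

type_synonym config = "nat \<Rightarrow> bool"

definition nbhd :: "(nat \<Rightarrow> nat \<Rightarrow> bool) \<Rightarrow> nat \<Rightarrow> nat \<Rightarrow> nat set" where
  "nbhd G n u = {v \<in> {1..n}. G u v}"

definition deg :: "(nat \<Rightarrow> nat \<Rightarrow> bool) \<Rightarrow> nat \<Rightarrow> nat \<Rightarrow> nat" where
  "deg G n u = card (nbhd G n u)"

definition vol :: "(nat \<Rightarrow> nat \<Rightarrow> bool) \<Rightarrow> nat \<Rightarrow> nat set \<Rightarrow> real" where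
  "vol G n S = (\<Sum>v\<in>S. real (deg G n v))"

definition blue_set :: "nat \<Rightarrow> config \<Rightarrow> nat set" where
  "blue_set n c = {u \<in> {1..n}. c u}"

definition red_set :: "nat \<Rightarrow> config \<Rightarrow> nat set" where
  "red_set n c = {u \<in> {1..n}. \<not> c u}"

text \<open>One node's update: sample k neighbours uniformly with replacement, each paired
  with an independent coin that is True with probability p (then the neighbour is seen as B);
  otherwise the neighbour's true state is seen.\<close>

definition node_update :: "nat set \<Rightarrow> nat \<Rightarrow> real \<Rightarrow> config \<Rightarrow> bool pmf" where
  "node_update Nu k p c =
     bind_pmf (Pi_pmf {..<k} (0, False) (\<lambda>_. pair_pmf (pmf_of_set Nu) (bernoulli_pmf p)))
       (\<lambda>s. let b = card {i \<in> {..<k}. snd (s i) \<or> c (fst (s i))};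
                r = k - b
            in if b > r then return_pmf True
               else if b < r then return_pmf False
               else bernoulli_pmf (1/2))"

definition em_step :: "(nat \<Rightarrow> nat \<Rightarrow> bool) \<Rightarrow> nat \<Rightarrow> nat \<Rightarrow> real \<Rightarrow> config \<Rightarrow> config pmf" where
  "em_step G n k p c = Pi_pmf {1..n} False (\<lambda>u. node_update (nbhd G n u) k p c)"

fun em_path :: "(nat \<Rightarrow> nat \<Rightarrow> bool) \<Rightarrow> nat \<Rightarrow> nat \<Rightarrow> real \<Rightarrow> config \<Rightarrow> nat \<Rightarrow> config list pmf" where
  "em_path G n k p c0 0 = return_pmf [c0]"
| "em_path G n k p c0 (Suc T) =
     bind_pmf (em_path G n k p c0 T) (\<lambda>xs. map_pmf (\<lambda>c. xs @ [c]) (em_step G n k p (last xs)))"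

end

(* A sample seen by a node is B with probability at most p plus the B-fraction of its
   neighbourhood, and R with probability at most 1 - p.  By Hoeffding's inequality over the
   k samples, a node adopts a state whose per-sample probability is a < 1/2 with probability at
   most exp (-2 k (1/2 - a)^2), which is below theta/2 for large k.  Hoeffding again, over the
   independent updates of the neighbours of each node, and a union bound over the nodes show
   that with probability at least 1 - n exp (-2 m (theta/2)^2), m the minimum degree, every
   neighbourhood has at most a theta-fraction in that state; double counting edges turns this
   into at most a theta-fraction of the volume.  For p > 1/2 this is applied to R after one
   round.  For p < 1/2, "every neighbourhood is at most a theta-fraction B" is an invariant
   that each round breaks with probability at most n exp (-2 m (theta/2)^2); over n^K rounds
   this adds up to n^(K+1) exp (-2 m (theta/2)^2), which vanishes because m = omega(log n). *)

theory Submission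
  imports Defs
begin

lemma measure_pmf_prob_bind:
  "measure_pmf.prob (bind_pmf M f) A = measure_pmf.expectation M (\<lambda>x. measure_pmf.prob (f x) A)"
proof -
  have "ennreal (measure_pmf.prob (bind_pmf M f) A) = emeasure (bind_pmf M f) A"
    by (simp add: measure_pmf.emeasure_eq_measure)
  also have "\<dots> = (\<integral>\<^sup>+x. emeasure (f x) A \<partial>M)"
    by simp
  also have "\<dots> = (\<integral>\<^sup>+x. ennreal (measure_pmf.prob (f x) A) \<partial>M)"
    by (intro nn_integral_cong) (simp add: measure_pmf.emeasure_eq_measure)
  also have "\<dots> = ennreal (measure_pmf.expectation M (\<lambda>x. measure_pmf.prob (f x) A))"
    by (intro nn_integral_eq_integral measure_pmf.integrable_const_bound[where B=1]) auto
  finally show ?thesis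
    by (simp add: ennreal_inj integral_nonneg)
qed

lemma prob_Pi_pmf_count_ge_le:
  fixes F :: "'i \<Rightarrow> 'a pmf" and a \<theta> :: real
  assumes I: "finite I" and J: "J \<subseteq> I" and a: "a \<le> \<theta>"
    and Q: "\<And>i. i \<in> J \<Longrightarrow> measure_pmf.prob (F i) {x. Q x} \<le> a"
  shows "measure_pmf.prob (Pi_pmf I d F) {s. \<theta> * card J \<le> card {i\<in>J. Q (s i)}}
           \<le> exp (- 2 * real (card J) * (\<theta> - a)\<^sup>2)"
proof (cases "J = {}")
  case True
  then show ?thesis by simp
next
  case False
  let ?M = "measure_pmf (Pi_pmf I d F)"
  have "finite J" using I J finite_subset by blast
  define X where "X = (\<lambda>(i::'i) (s::'i \<Rightarrow> 'a). if Q (s i) then 1 else 0 :: real)"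
  have expectation_X: "measure_pmf.expectation (Pi_pmf I d F) (X i) = measure_pmf.prob (F i) {x. Q x}"
    if "i \<in> J" for i
  proof -
    have "measure_pmf.expectation (Pi_pmf I d F) (X i)
          = measure_pmf.expectation (map_pmf (\<lambda>s. s i) (Pi_pmf I d F)) (\<lambda>x. if Q x then 1 else 0)"
      by (simp add: X_def)
    also have "map_pmf (\<lambda>s. s i) (Pi_pmf I d F) = F i"
      using that J I by (subst Pi_pmf_component) auto
    also have "(\<lambda>x. if Q x then 1 else 0) = indicator {x. Q x}"
      by (auto simp: indicator_def)
    finally show ?thesis by simp
  qed
  define \<mu> where "\<mu> = (\<Sum>i\<in>J. measure_pmf.expectation (Pi_pmf I d F) (X i))"
  interpret Hoeffding_ineq ?M J X "\<lambda>_. 0" "\<lambda>_. 1" \<mu>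
  proof unfold_locales
    show "finite J" by fact
    show "prob_space.indep_vars ?M (\<lambda>_. borel) X J"
      unfolding X_def
      by (intro prob_space.indep_vars_compose2[OF _ prob_space.indep_vars_subset[OF _ indep_vars_Pi_pmf[OF I] J]])
         (auto simp: measure_pmf.prob_space_axioms)
  qed (auto simp: X_def \<mu>_def)
  have sum_X: "(\<Sum>i\<in>J. X i s) = card {i\<in>J. Q (s i)}" for s
    unfolding X_def using \<open>finite J\<close> by (simp add: sum.If_cases Int_def)
  have "\<mu> \<le> a * card J"
    using sum_bounded_above[of J "\<lambda>i. measure_pmf.prob (F i) {x. Q x}" a] Q
    by (simp add: \<mu>_def expectation_X mult.commute)
  then have "measure_pmf.prob (Pi_pmf I d F) {s. \<theta> * card J \<le> card {i\<in>J. Q (s i)}}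
      \<le> measure_pmf.prob (Pi_pmf I d F) {s \<in> space ?M. (\<Sum>i\<in>J. X i s) \<ge> \<mu> + (\<theta> - a) * card J}"
    by (intro measure_pmf.finite_measure_mono) (auto simp: sum_X left_diff_distrib)
  also have "\<dots> \<le> exp (- 2 * ((\<theta> - a) * card J)\<^sup>2 / (\<Sum>i\<in>J. (1 - 0)\<^sup>2))"
    using a False \<open>finite J\<close> by (intro Hoeffding_ineq_ge) auto
  also have "\<dots> = exp (- 2 * real (card J) * (\<theta> - a)\<^sup>2)"
    using False \<open>finite J\<close> by (simp add: power2_eq_square)
  finally show ?thesis .
qed

lemma card_filter_add_card_filter_not:
  "finite A \<Longrightarrow> card {x\<in>A. P x} + card {x\<in>A. \<not> P x} = card A"
  by (subst card_Un_disjoint[symmetric]) (auto intro: arg_cong[where f = card])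

lemma pmf_node_update_le_prob_majority:
  "pmf (node_update Nu k p c) x
     \<le> measure_pmf.prob (Pi_pmf {..<k} (0, False) (\<lambda>_. pair_pmf (pmf_of_set Nu) (bernoulli_pmf p)))
           {s. 1/2 * card {..<k} \<le> card {i\<in>{..<k}. (snd (s i) \<or> c (fst (s i))) = x}}"
  (is "_ \<le> measure_pmf.prob ?S ?E")
proof -
  let ?decide = "\<lambda>s. let b = card {i \<in> {..<k}. snd (s i) \<or> c (fst (s i))}; r = k - b
      in if b > r then return_pmf True else if b < r then return_pmf False else bernoulli_pmf (1/2)"
  have decide_le: "pmf (?decide s) x \<le> indicator ?E s" for s
  proof -
    define b where "b = card {i \<in> {..<k}. snd (s i) \<or> c (fst (s i))}"
    define r where "r = card {i \<in> {..<k}. \<not> (snd (s i) \<or> c (fst (s i)))}"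
    have "b + r = k"
      unfolding b_def r_def by (subst card_filter_add_card_filter_not) simp_all
    moreover have "card {i\<in>{..<k}. (snd (s i) \<or> c (fst (s i))) = x} = (if x then b else r)"
      unfolding b_def r_def by (cases x) simp_all
    ultimately show ?thesis
      unfolding Let_def b_def[symmetric] by (cases x) (auto simp: indicator_def pmf_le_1)
  qed
  have "pmf (node_update Nu k p c) x = measure_pmf.expectation ?S (\<lambda>s. pmf (?decide s) x)"
    unfolding node_update_def by (rule pmf_bind)
  also have "\<dots> \<le> measure_pmf.expectation ?S (indicator ?E)"
    by (intro integral_mono measure_pmf.integrable_const_bound[where B=1] decide_le) (auto simp: pmf_le_1)
  finally show ?thesis by simp
qed

lemma pmf_node_update_le_exp:
  fixes a :: real
  assumes "measure_pmf.prob (pair_pmf (pmf_of_set Nu) (bernoulli_pmf p)) {z. (snd z \<or> c (fst z)) = x} \<le> a"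
    and "a \<le> 1/2"
  shows "pmf (node_update Nu k p c) x \<le> exp (- 2 * real k * (1/2 - a)\<^sup>2)"
  using pmf_node_update_le_prob_majority[of Nu k p c x]
    prob_Pi_pmf_count_ge_le[of "{..<k}" "{..<k}" a "1/2" "\<lambda>_. pair_pmf (pmf_of_set Nu) (bernoulli_pmf p)"
      "\<lambda>z. (snd z \<or> c (fst z)) = x" "(0, False)"] assms
  by simp

lemma prob_seen_blue_le:
  assumes "finite Nu" "Nu \<noteq> {}" "0 \<le> p" "p \<le> 1"
  shows "measure_pmf.prob (pair_pmf (pmf_of_set Nu) (bernoulli_pmf p)) {z. snd z \<or> c (fst z)}
           \<le> p + card {v\<in>Nu. c v} / card Nu"
proof -
  let ?P = "pair_pmf (pmf_of_set Nu) (bernoulli_pmf p)"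
  have "measure_pmf.prob ?P {z. snd z \<or> c (fst z)}
          \<le> measure_pmf.prob ?P {z. snd z} + measure_pmf.prob ?P {z. c (fst z)}"
    by (subst Collect_disj_eq) (rule measure_Un_le; simp)
  also have "measure_pmf.prob ?P {z. snd z} = measure_pmf.prob (map_pmf snd ?P) {True}"
    by (simp add: vimage_def)
  also have "\<dots> = p"
    using assms by (simp add: map_snd_pair_pmf measure_pmf_single)
  also have "measure_pmf.prob ?P {z. c (fst z)} = measure_pmf.prob (map_pmf fst ?P) {v. c v}"
    by (simp add: vimage_def)
  also have "\<dots> = card {v\<in>Nu. c v} / card Nu"
    using assms by (simp add: map_fst_pair_pmf measure_pmf_of_set Int_def conj_commute)
  finally show ?thesis .
qed

lemma prob_seen_red_le:
  assumes "0 \<le> p" "p \<le> 1"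
  shows "measure_pmf.prob (pair_pmf (pmf_of_set Nu) (bernoulli_pmf p)) {z. \<not> (snd z \<or> c (fst z))} \<le> 1 - p"
proof -
  let ?P = "pair_pmf (pmf_of_set Nu) (bernoulli_pmf p)"
  have "measure_pmf.prob ?P {z. \<not> (snd z \<or> c (fst z))} \<le> measure_pmf.prob ?P {z. \<not> snd z}"
    by (intro measure_pmf.finite_measure_mono) auto
  also have "\<dots> = measure_pmf.prob (map_pmf snd ?P) {False}"
    by (simp add: vimage_def)
  also have "\<dots> = 1 - p"
    using assms by (simp add: map_snd_pair_pmf measure_pmf_single)
  finally show ?thesis .
qed

definition locally_sparse :: "(nat \<Rightarrow> nat \<Rightarrow> bool) \<Rightarrow> nat \<Rightarrow> real \<Rightarrow> (nat \<Rightarrow> bool) \<Rightarrow> bool" where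
  "locally_sparse G n \<theta> P \<longleftrightarrow> (\<forall>u\<in>{1..n}. real (card {v\<in>nbhd G n u. P v}) \<le> \<theta> * real (deg G n u))"

lemma vol_le_if_locally_sparse:
  assumes sym: "\<And>u v. G u v \<longleftrightarrow> G v u" and sparse: "locally_sparse G n \<theta> P"
  shows "vol G n {v\<in>{1..n}. P v} \<le> \<theta> * vol G n {1..n}"
proof -
  let ?S = "{v\<in>{1..n}. P v}"
  have "vol G n ?S = (\<Sum>v\<in>?S. \<Sum>u\<in>{1..n}. if G v u then 1 else 0)"
    unfolding vol_def deg_def nbhd_def by (intro sum.cong refl) (simp add: sum.If_cases Int_def)
  also have "\<dots> = (\<Sum>u\<in>{1..n}. \<Sum>v\<in>?S. if G u v then 1 else 0)"
    by (subst sum.swap) (simp add: sym)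
  also have "\<dots> = (\<Sum>u\<in>{1..n}. real (card {v\<in>nbhd G n u. P v}))"
    by (intro sum.cong refl) (auto simp: sum.If_cases nbhd_def Int_def conj_commute intro: arg_cong[where f = card])
  also have "\<dots> \<le> (\<Sum>u\<in>{1..n}. \<theta> * deg G n u)"
    using sparse by (intro sum_mono) (simp add: locally_sparse_def)
  also have "\<dots> = \<theta> * vol G n {1..n}"
    by (simp add: vol_def sum_distrib_left)
  finally show ?thesis .
qed

lemma vol_fraction_ge_if_locally_sparse:
  assumes "\<And>u v. G u v \<longleftrightarrow> G v u" "locally_sparse G n \<theta> (\<lambda>v. \<not> P v)" "vol G n {1..n} > 0"
  shows "vol G n {v\<in>{1..n}. P v} / vol G n {1..n} \<ge> 1 - \<theta>"
proof -
  have "vol G n {1..n} = vol G n {v\<in>{1..n}. P v} + vol G n {v\<in>{1..n}. \<not> P v}"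
    unfolding vol_def by (subst sum.Int_Diff[where B = "{v. P v}"]) (simp_all add: Int_def set_diff_eq)
  with vol_le_if_locally_sparse[OF assms(1,2)] assms(3) show ?thesis
    by (simp add: field_simps)
qed

lemma vol_pos:
  assumes "1 \<le> n" "\<And>u. u \<in> {1..n} \<Longrightarrow> 0 < deg G n u"
  shows "vol G n {1..n} > 0"
proof -
  have "real (deg G n 1) \<le> vol G n {1..n}"
    unfolding vol_def using assms(1) by (intro member_le_sum) auto
  moreover have "0 < deg G n 1"
    using assms by simp
  ultimately show ?thesis
    by linarith
qed

lemma prob_not_locally_sparse_le:
  fixes a \<theta> :: real
  assumes "a \<le> \<theta>"
    and "\<And>v. v \<in> {1..n} \<Longrightarrow> measure_pmf.prob (F v) {x. Q x} \<le> a"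
    and "\<And>u. u \<in> {1..n} \<Longrightarrow> m \<le> deg G n u"
  shows "measure_pmf.prob (Pi_pmf {1..n} d F) {c. \<not> locally_sparse G n \<theta> (\<lambda>v. Q (c v))}
           \<le> n * exp (- 2 * real m * (\<theta> - a)\<^sup>2)"
proof -
  let ?M = "Pi_pmf {1..n} d F"
  let ?A = "\<lambda>u. {c. \<theta> * card (nbhd G n u) \<le> card {v\<in>nbhd G n u. Q (c v)}}"
  have "{c. \<not> locally_sparse G n \<theta> (\<lambda>v. Q (c v))} \<subseteq> (\<Union>u\<in>{1..n}. ?A u)"
    by (auto simp: locally_sparse_def deg_def)
  then have "measure_pmf.prob ?M {c. \<not> locally_sparse G n \<theta> (\<lambda>v. Q (c v))}
               \<le> (\<Sum>u\<in>{1..n}. measure_pmf.prob ?M (?A u))"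
    by (intro order_trans[OF measure_pmf.finite_measure_mono measure_UNION_le]) auto
  also have "\<dots> \<le> (\<Sum>u\<in>{1..n}. exp (- 2 * real m * (\<theta> - a)\<^sup>2))"
  proof (intro sum_mono)
    fix u assume u: "u \<in> {1..n}"
    have "measure_pmf.prob ?M (?A u) \<le> exp (- 2 * real (card (nbhd G n u)) * (\<theta> - a)\<^sup>2)"
      using assms(1,2) by (intro prob_Pi_pmf_count_ge_le) (auto simp: nbhd_def)
    also have "\<dots> \<le> exp (- 2 * real m * (\<theta> - a)\<^sup>2)"
      using assms(3)[OF u] by (simp add: deg_def mult_right_mono)
    finally show "measure_pmf.prob ?M (?A u) \<le> exp (- 2 * real m * (\<theta> - a)\<^sup>2)" .
  qed
  finally show ?thesis by simp
qed

lemma prob_em_step_not_blue_sparse_le: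
  fixes \<theta> :: real
  assumes p: "0 \<le> p" "p + \<theta> \<le> 1/2" and \<theta>: "0 \<le> \<theta>"
    and k: "exp (- 2 * real k * (1/2 - (p + \<theta>))\<^sup>2) \<le> \<theta>/2"
    and deg: "0 < m" "\<And>u. u \<in> {1..n} \<Longrightarrow> m \<le> deg G n u"
    and sparse: "locally_sparse G n \<theta> c"
  shows "measure_pmf.prob (em_step G n k p c) {c'. \<not> locally_sparse G n \<theta> c'}
           \<le> n * exp (- 2 * real m * (\<theta>/2)\<^sup>2)"
proof -
  have node: "measure_pmf.prob (node_update (nbhd G n u) k p c) {x. x} \<le> \<theta>/2"
    if u: "u \<in> {1..n}" for u
  proof -
    let ?N = "nbhd G n u"
    have "0 < card ?N"
      using deg u by (fastforce simp: deg_def)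
    then have N: "finite ?N" "?N \<noteq> {}"
      by (simp_all add: card_gt_0_iff)
    have "card {v\<in>?N. c v} / card ?N \<le> \<theta>"
      using sparse u N by (simp add: locally_sparse_def deg_def divide_le_eq card_gt_0_iff)
    then have "measure_pmf.prob (pair_pmf (pmf_of_set ?N) (bernoulli_pmf p)) {z. (snd z \<or> c (fst z)) = True}
                 \<le> p + \<theta>"
      using prob_seen_blue_le[OF N p(1), of c] p \<theta> by simp
    then have "pmf (node_update ?N k p c) True \<le> \<theta>/2"
      using pmf_node_update_le_exp[of ?N p c True "p + \<theta>" k] p k by simp
    moreover have "{x. x} = {True}"
      by auto
    ultimately show ?thesis
      by (simp add: measure_pmf_single)
  qed
  have "measure_pmf.prob (Pi_pmf {1..n} False (\<lambda>u. node_update (nbhd G n u) k p c))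
          {c'. \<not> locally_sparse G n \<theta> (\<lambda>v. c' v)} \<le> n * exp (- 2 * real m * (\<theta> - \<theta>/2)\<^sup>2)"
    using \<theta> node deg(2) by (intro prob_not_locally_sparse_le) auto
  then show ?thesis
    by (simp add: em_step_def)
qed

lemma prob_em_step_not_red_sparse_le:
  fixes \<theta> :: real
  assumes p: "1/2 \<le> p" "p \<le> 1" and \<theta>: "0 \<le> \<theta>"
    and k: "exp (- 2 * real k * (p - 1/2)\<^sup>2) \<le> \<theta>/2"
    and deg: "\<And>u. u \<in> {1..n} \<Longrightarrow> m \<le> deg G n u"
  shows "measure_pmf.prob (em_step G n k p c) {c'. \<not> locally_sparse G n \<theta> (\<lambda>v. \<not> c' v)}
           \<le> n * exp (- 2 * real m * (\<theta>/2)\<^sup>2)"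
proof -
  have node: "measure_pmf.prob (node_update (nbhd G n u) k p c) {x. \<not> x} \<le> \<theta>/2" for u
  proof -
    let ?N = "nbhd G n u"
    have "measure_pmf.prob (pair_pmf (pmf_of_set ?N) (bernoulli_pmf p)) {z. (snd z \<or> c (fst z)) = False}
            \<le> 1 - p"
      using prob_seen_red_le[of p ?N c] p by simp
    then have "pmf (node_update ?N k p c) False \<le> \<theta>/2"
      using pmf_node_update_le_exp[of ?N p c False "1 - p" k] p k by simp
    moreover have "{x. \<not> x} = {False}"
      by auto
    ultimately show ?thesis
      by (simp add: measure_pmf_single)
  qed
  have "measure_pmf.prob (Pi_pmf {1..n} False (\<lambda>u. node_update (nbhd G n u) k p c))
          {c'. \<not> locally_sparse G n \<theta> (\<lambda>v. \<not> c' v)} \<le> n * exp (- 2 * real m * (\<theta> - \<theta>/2)\<^sup>2)"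
    using \<theta> node deg by (intro prob_not_locally_sparse_le) auto
  then show ?thesis
    by (simp add: em_step_def)
qed

lemma length_em_path: "xs \<in> set_pmf (em_path G n k p c0 T) \<Longrightarrow> length xs = Suc T"
  by (induction T arbitrary: xs) auto

lemma prob_em_path_leaves_invariant_le:
  fixes \<epsilon> :: real
  assumes step: "\<And>c. good c \<Longrightarrow> measure_pmf.prob (em_step G n k p c) {c'. \<not> good c'} \<le> \<epsilon>"
    and start: "good c0"
  shows "measure_pmf.prob (em_path G n k p c0 T) {xs. \<exists>t\<le>T. \<not> good (xs ! t)} \<le> T * \<epsilon>"
proof (induction T)
  case 0
  show ?case using start by simp
next
  case (Suc T)
  let ?Bad = "\<lambda>T. {xs. \<exists>t\<le>T. \<not> good (xs ! t)}"
  let ?path = "em_path G n k p c0 T"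
  have "0 \<le> \<epsilon>"
    using step[OF start] measure_nonneg order_trans by blast
  have extend: "measure_pmf.prob (em_step G n k p (last xs)) {c. xs @ [c] \<in> ?Bad (Suc T)}
                  \<le> indicator (?Bad T) xs + \<epsilon>"
    if "xs \<in> set_pmf ?path" for xs
  proof (cases "xs \<in> ?Bad T")
    case True
    then show ?thesis
      using \<open>0 \<le> \<epsilon>\<close> by (simp add: measure_pmf.prob_le_1 add_increasing2)
  next
    case False
    have len: "length xs = Suc T"
      using that by (rule length_em_path)
    then have "last xs = xs ! T"
      by (subst last_conv_nth) auto
    then have "good (last xs)"
      using False by simp
    moreover have "{c. xs @ [c] \<in> ?Bad (Suc T)} = {c. \<not> good c}"
      using False len by (auto simp: nth_append le_Suc_eq)
    ultimately show ?thesis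
      using False step by simp
  qed
  have "measure_pmf.prob (em_path G n k p c0 (Suc T)) (?Bad (Suc T))
          = measure_pmf.expectation ?path
              (\<lambda>xs. measure_pmf.prob (em_step G n k p (last xs)) {c. xs @ [c] \<in> ?Bad (Suc T)})"
    by (simp add: measure_pmf_prob_bind vimage_def)
  also have "\<dots> \<le> measure_pmf.expectation ?path (\<lambda>xs. indicator (?Bad T) xs + \<epsilon>)"
    using extend \<open>0 \<le> \<epsilon>\<close>
    by (intro integral_mono_AE AE_pmfI measure_pmf.integrable_const_bound[where B = "1 + \<epsilon>"])
       (auto simp: indicator_def intro: order_trans[OF measure_pmf.prob_le_1])
  also have "\<dots> = measure_pmf.prob ?path (?Bad T) + \<epsilon>"
    by (subst Bochner_Integration.integral_add) (auto intro!: measure_pmf.integrable_const_bound[where B=1])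
  also have "\<dots> \<le> Suc T * \<epsilon>"
    using Suc by (simp add: algebra_simps)
  finally show ?case .
qed

lemma prob_fast_disruption_ge:
  fixes \<gamma> :: real
  assumes sym: "\<And>u v. G u v \<longleftrightarrow> G v u" and p: "1/2 \<le> p" "p \<le> 1" and \<gamma>: "0 \<le> \<gamma>"
    and k: "exp (- 2 * real k * (p - 1/2)\<^sup>2) \<le> \<gamma>/2"
    and n: "1 \<le> n" and deg: "0 < m" "\<And>u. u \<in> {1..n} \<Longrightarrow> m \<le> deg G n u"
  shows "measure_pmf.prob (em_path G n k p c0 1)
           {xs. vol G n (blue_set n (xs ! 1)) / vol G n {1..n} \<ge> 1 - \<gamma>}
         \<ge> 1 - n * exp (- 2 * real m * (\<gamma>/2)\<^sup>2)"
proof -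
  let ?step = "em_step G n k p c0"
  have "vol G n {1..n} > 0"
    using n deg by (intro vol_pos) (auto intro: order.strict_trans2)
  then have "{c. locally_sparse G n \<gamma> (\<lambda>v. \<not> c v)}
               \<subseteq> {c. vol G n (blue_set n c) / vol G n {1..n} \<ge> 1 - \<gamma>}"
    using vol_fraction_ge_if_locally_sparse[OF sym] by (auto simp: blue_set_def)
  then have "measure_pmf.prob ?step {c. locally_sparse G n \<gamma> (\<lambda>v. \<not> c v)}
               \<le> measure_pmf.prob (em_path G n k p c0 1)
                    {xs. vol G n (blue_set n (xs ! 1)) / vol G n {1..n} \<ge> 1 - \<gamma>}"
    by (auto simp: bind_return_pmf vimage_def intro!: measure_pmf.finite_measure_mono)
  moreover have "measure_pmf.prob ?step {c. \<not> locally_sparse G n \<gamma> (\<lambda>v. \<not> c v)}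
                   \<le> n * exp (- 2 * real m * (\<gamma>/2)\<^sup>2)"
    using p \<gamma> k deg by (intro prob_em_step_not_red_sparse_le)
  moreover have "measure_pmf.prob ?step {c. locally_sparse G n \<gamma> (\<lambda>v. \<not> c v)}
                   = 1 - measure_pmf.prob ?step {c. \<not> locally_sparse G n \<gamma> (\<lambda>v. \<not> c v)}"
    using measure_pmf.prob_compl[of "{c. \<not> locally_sparse G n \<gamma> (\<lambda>v. \<not> c v)}" ?step]
    by (simp add: Compl_eq_Diff_UNIV[symmetric] Collect_neg_eq[symmetric])
  ultimately show ?thesis
    by linarith
qed

lemma prob_slow_disruption_ge:
  fixes \<theta> :: real
  assumes sym: "\<And>u v. G u v \<longleftrightarrow> G v u" and p: "0 \<le> p" "p + \<theta> \<le> 1/2" and \<theta>: "0 \<le> \<theta>"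
    and k: "exp (- 2 * real k * (1/2 - (p + \<theta>))\<^sup>2) \<le> \<theta>/2"
    and n: "1 \<le> n" and deg: "0 < m" "\<And>u. u \<in> {1..n} \<Longrightarrow> m \<le> deg G n u"
  shows "measure_pmf.prob (em_path G n k p (\<lambda>_. False) T)
           {xs. \<forall>t\<le>T. vol G n (red_set n (xs ! t)) / vol G n {1..n} \<ge> 1 - \<theta>}
         \<ge> 1 - T * (n * exp (- 2 * real m * (\<theta>/2)\<^sup>2))"
proof -
  let ?path = "em_path G n k p (\<lambda>_. False) T"
  let ?Bad = "{xs. \<exists>t\<le>T. \<not> locally_sparse G n \<theta> (xs ! t)}"
  have "vol G n {1..n} > 0"
    using n deg by (intro vol_pos) (auto intro: order.strict_trans2)
  then have "vol G n (red_set n c) / vol G n {1..n} \<ge> 1 - \<theta>" if "locally_sparse G n \<theta> c" for c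
    using vol_fraction_ge_if_locally_sparse[OF sym, where P = "\<lambda>v. \<not> c v"] that
    by (simp add: red_set_def)
  then have "UNIV - ?Bad \<subseteq> {xs. \<forall>t\<le>T. vol G n (red_set n (xs ! t)) / vol G n {1..n} \<ge> 1 - \<theta>}"
    by auto
  then have "measure_pmf.prob ?path (UNIV - ?Bad)
               \<le> measure_pmf.prob ?path {xs. \<forall>t\<le>T. vol G n (red_set n (xs ! t)) / vol G n {1..n} \<ge> 1 - \<theta>}"
    by (intro measure_pmf.finite_measure_mono) auto
  moreover have "measure_pmf.prob ?path ?Bad \<le> T * (n * exp (- 2 * real m * (\<theta>/2)\<^sup>2))"
  proof (rule prob_em_path_leaves_invariant_le)
    show "locally_sparse G n \<theta> (\<lambda>_. False)"
      using \<theta> by (simp add: locally_sparse_def)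
  qed (use p \<theta> k deg in \<open>intro prob_em_step_not_blue_sparse_le\<close>)
  ultimately show ?thesis
    using measure_pmf.prob_compl[of ?Bad ?path] by simp
qed

lemma exp_le_if_gt_threshold:
  fixes d \<epsilon> :: real
  assumes "d \<noteq> 0" "0 < \<epsilon>" "real k > ln (1 / \<epsilon>) / (2 * d\<^sup>2)"
  shows "exp (- 2 * real k * d\<^sup>2) \<le> \<epsilon>"
proof -
  have "ln (1 / \<epsilon>) < real k * (2 * d\<^sup>2)"
    using assms by (simp add: pos_divide_less_eq)
  then have "- 2 * real k * d\<^sup>2 < ln \<epsilon>"
    using assms(2) by (simp add: ln_div)
  then have "exp (- 2 * real k * d\<^sup>2) < exp (ln \<epsilon>)"
    by (rule exp_less_mono)
  then show ?thesis
    using assms(2) by simp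
qed

lemma powr_mult_exp_neg_tendsto_0:
  fixes m :: "nat \<Rightarrow> nat" and c K :: real
  assumes lim: "filterlim (\<lambda>n. real (m n) / ln (real n)) at_top sequentially" and c: "0 < c"
  shows "(\<lambda>n. real n powr K * exp (- c * real (m n))) \<longlonglongrightarrow> 0"
proof -
  have ln: "filterlim (\<lambda>n. ln (real n)) at_top sequentially"
    by (rule filterlim_compose[OF ln_at_top filterlim_real_sequentially])
  have "filterlim (\<lambda>n. - K + c * (real (m n) / ln (real n))) at_top sequentially"
    by (intro filterlim_tendsto_add_at_top[OF tendsto_const]
        filterlim_tendsto_pos_mult_at_top[OF tendsto_const c lim])
  with ln have "filterlim (\<lambda>n. ln (real n) * (- K + c * (real (m n) / ln (real n)))) at_top sequentially"
    by (rule filterlim_at_top_mult_at_top)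
  moreover have "eventually (\<lambda>n. ln (real n) * (- K + c * (real (m n) / ln (real n)))
                                   = c * real (m n) - K * ln (real n)) sequentially"
    using eventually_gt_at_top[of 1] by eventually_elim (simp add: algebra_simps)
  ultimately have "filterlim (\<lambda>n. c * real (m n) - K * ln (real n)) at_top sequentially"
    using filterlim_cong by fastforce
  then have "(\<lambda>n. exp (K * ln (real n) - c * real (m n))) \<longlonglongrightarrow> 0"
    by (intro filterlim_compose[OF exp_at_bot]) (simp add: filterlim_uminus_at_bot algebra_simps)
  moreover have "eventually (\<lambda>n. exp (K * ln (real n) - c * real (m n))
                                   = real n powr K * exp (- c * real (m n))) sequentially"
    using eventually_gt_at_top[of 0] by eventually_elim (simp add: powr_def exp_diff exp_minus field_simps)
  ultimately show ?thesis
    by (rule Lim_transform_eventually)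
qed

(* As ln 0 = 0 and x / 0 = 0, a ratio of at least 1 already forces n \<ge> 1 and m n > 0. *)
lemma eventually_pos_if_ratio_at_top:
  fixes m :: "nat \<Rightarrow> nat"
  assumes "filterlim (\<lambda>n. real (m n) / ln (real n)) at_top sequentially"
  shows "eventually (\<lambda>n. 0 < m n \<and> 1 \<le> n) sequentially"
  using assms[unfolded filterlim_at_top, rule_format, of 1]
  by eventually_elim (auto intro: Nat.gr0I simp: Suc_le_eq)

lemma fast_disruption:
  fixes E :: "nat \<Rightarrow> nat \<Rightarrow> nat \<Rightarrow> bool" and \<gamma> :: real
  assumes sym: "\<forall>n u v. E n u v \<longleftrightarrow> E n v u"
    and lim: "filterlim (\<lambda>n. real (Min ((\<lambda>u. deg (E n) n u) ` {1..n})) / ln (real n)) at_top sequentially"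
    and p: "1/2 \<le> p" "p \<le> 1" and \<gamma>: "0 < \<gamma>"
    and k: "exp (- 2 * real k * (p - 1/2)\<^sup>2) \<le> \<gamma>/2"
  shows "(\<lambda>n. measure_pmf.prob (em_path (E n) n k p c0 1)
             {xs. vol (E n) n (blue_set n (xs ! 1)) / vol (E n) n {1..n} \<ge> 1 - \<gamma>}) \<longlonglongrightarrow> 1"
proof -
  define m where "m n = Min ((\<lambda>u. deg (E n) n u) ` {1..n})" for n
  define err where "err n = real n powr 1 * exp (- (2 * (\<gamma>/2)\<^sup>2) * real (m n))" for n
  have lim_m: "filterlim (\<lambda>n. real (m n) / ln (real n)) at_top sequentially"
    using lim by (simp add: m_def)
  have "err \<longlonglongrightarrow> 0"
    unfolding err_def using \<gamma> by (intro powr_mult_exp_neg_tendsto_0[OF lim_m]) simp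
  then have lower_lim: "(\<lambda>n. 1 - err n) \<longlonglongrightarrow> 1"
    using tendsto_diff[OF tendsto_const] by fastforce
  have lower: "eventually (\<lambda>n. 1 - err n \<le> measure_pmf.prob (em_path (E n) n k p c0 1)
             {xs. vol (E n) n (blue_set n (xs ! 1)) / vol (E n) n {1..n} \<ge> 1 - \<gamma>}) sequentially"
    using eventually_pos_if_ratio_at_top[OF lim_m]
  proof eventually_elim
    case (elim n)
    have deg: "m n \<le> deg (E n) n u" if "u \<in> {1..n}" for u
      unfolding m_def using that by (intro Min_le) auto
    have "1 - n * exp (- 2 * real (m n) * (\<gamma>/2)\<^sup>2) \<le> measure_pmf.prob (em_path (E n) n k p c0 1)
             {xs. vol (E n) n (blue_set n (xs ! 1)) / vol (E n) n {1..n} \<ge> 1 - \<gamma>}"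
      using sym p \<gamma> k elim deg by (intro prob_fast_disruption_ge) auto
    then show ?case
      using elim by (simp add: err_def mult_ac)
  qed
  show ?thesis
    by (rule tendsto_sandwich[OF lower always_eventually lower_lim tendsto_const])
       (simp add: measure_pmf.prob_le_1)
qed

lemma slow_disruption:
  fixes E :: "nat \<Rightarrow> nat \<Rightarrow> nat \<Rightarrow> bool" and \<gamma> \<theta> K :: real
  assumes sym: "\<forall>n u v. E n u v \<longleftrightarrow> E n v u"
    and lim: "filterlim (\<lambda>n. real (Min ((\<lambda>u. deg (E n) n u) ` {1..n})) / ln (real n)) at_top sequentially"
    and p: "0 \<le> p" "p + \<theta> \<le> 1/2" and \<theta>: "0 < \<theta>" "\<theta> \<le> \<gamma>"
    and k: "exp (- 2 * real k * (1/2 - (p + \<theta>))\<^sup>2) \<le> \<theta>/2"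
  shows "(\<lambda>n. measure_pmf.prob (em_path (E n) n k p (\<lambda>_. False) (nat \<lfloor>real n powr K\<rfloor>))
             {xs. \<forall>t \<le> nat \<lfloor>real n powr K\<rfloor>.
                    vol (E n) n (red_set n (xs ! t)) / vol (E n) n {1..n} \<ge> 1 - \<gamma>}) \<longlonglongrightarrow> 1"
proof -
  define m where "m n = Min ((\<lambda>u. deg (E n) n u) ` {1..n})" for n
  define err where "err n = real n powr (K + 1) * exp (- (2 * (\<theta>/2)\<^sup>2) * real (m n))" for n
  have lim_m: "filterlim (\<lambda>n. real (m n) / ln (real n)) at_top sequentially"
    using lim by (simp add: m_def)
  have "err \<longlonglongrightarrow> 0"
    unfolding err_def using \<theta> by (intro powr_mult_exp_neg_tendsto_0[OF lim_m]) simp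
  then have lower_lim: "(\<lambda>n. 1 - err n) \<longlonglongrightarrow> 1"
    using tendsto_diff[OF tendsto_const] by fastforce
  have lower: "eventually (\<lambda>n. 1 - err n \<le> measure_pmf.prob (em_path (E n) n k p (\<lambda>_. False) (nat \<lfloor>real n powr K\<rfloor>))
             {xs. \<forall>t \<le> nat \<lfloor>real n powr K\<rfloor>.
                    vol (E n) n (red_set n (xs ! t)) / vol (E n) n {1..n} \<ge> 1 - \<gamma>}) sequentially"
    using eventually_pos_if_ratio_at_top[OF lim_m]
  proof eventually_elim
    case (elim n)
    define T where "T = nat \<lfloor>real n powr K\<rfloor>"
    define e where "e = exp (- 2 * real (m n) * (\<theta>/2)\<^sup>2)"
    have deg: "m n \<le> deg (E n) n u" if "u \<in> {1..n}" for u
      unfolding m_def using that by (intro Min_le) auto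
    have "real T \<le> real n powr K"
      unfolding T_def by (simp add: of_nat_nat)
    then have "real T * (real n * e) \<le> real n powr K * (real n * e)"
      by (rule mult_right_mono) (simp add: e_def)
    also have "\<dots> = err n"
      using elim by (simp add: err_def e_def powr_add)
    finally have "real T * (real n * e) \<le> err n" .
    moreover have "1 - T * (n * e) \<le> measure_pmf.prob (em_path (E n) n k p (\<lambda>_. False) T)
           {xs. \<forall>t\<le>T. vol (E n) n (red_set n (xs ! t)) / vol (E n) n {1..n} \<ge> 1 - \<theta>}"
      unfolding e_def using sym p \<theta> k elim deg by (intro prob_slow_disruption_ge) auto
    moreover have "\<dots> \<le> measure_pmf.prob (em_path (E n) n k p (\<lambda>_. False) T)
           {xs. \<forall>t\<le>T. vol (E n) n (red_set n (xs ! t)) / vol (E n) n {1..n} \<ge> 1 - \<gamma>}"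
      using \<theta> by (intro measure_pmf.finite_measure_mono) auto
    ultimately show ?case
      unfolding T_def by linarith
  qed
  show ?thesis
    by (rule tendsto_sandwich[OF lower always_eventually lower_lim tendsto_const])
       (simp add: measure_pmf.prob_le_1)
qed

theorem proposition6p4:
  fixes p \<gamma> :: real
  assumes "0 \<le> p" and "p \<le> 1" and "\<gamma> > 0"
  shows "\<exists>H::real. \<forall>E :: nat \<Rightarrow> nat \<Rightarrow> nat \<Rightarrow> bool.
    ((\<forall>n u v. E n u v \<longleftrightarrow> E n v u) \<and> (\<forall>n u. \<not> E n u u) \<and>
     filterlim (\<lambda>n. real (Min ((\<lambda>u. deg (E n) n u) ` {1..n})) / ln (real n)) at_top sequentially)
    \<longrightarrow>
    (p > 1/2 \<longrightarrow> (\<forall>k::nat. real k > H \<longrightarrow>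
        ((\<lambda>n. measure_pmf.prob (em_path (E n) n k p (\<lambda>_. False) 1)
             {xs. vol (E n) n (blue_set n (xs ! 1)) / vol (E n) n {1..n} \<ge> 1 - \<gamma>})
          \<longlonglongrightarrow> 1)))
    \<and>
    (p < 1/2 \<longrightarrow> (\<forall>k::nat. real k > H \<longrightarrow> (\<forall>K::real. K > 0 \<longrightarrow>
        ((\<lambda>n. measure_pmf.prob (em_path (E n) n k p (\<lambda>_. False) (nat \<lfloor>real n powr K\<rfloor>))
             {xs. \<forall>t \<le> nat \<lfloor>real n powr K\<rfloor>.
                    vol (E n) n (red_set n (xs ! t)) / vol (E n) n {1..n} \<ge> 1 - \<gamma>})
          \<longlonglongrightarrow> 1))))"
proof -
  \<comment> \<open>the B-fraction tolerated in a neighbourhood must keep \<open>p + \<theta>\<close> below 1/2\<close>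
  define \<theta> where "\<theta> = min \<gamma> ((1/2 - p)/2)"
  define H where "H = max (ln (1 / (\<gamma>/2)) / (2 * (p - 1/2)\<^sup>2))
                          (ln (1 / (\<theta>/2)) / (2 * (1/2 - (p + \<theta>))\<^sup>2))"
  have fast: "exp (- 2 * real k * (p - 1/2)\<^sup>2) \<le> \<gamma>/2" if "p > 1/2" "real k > H" for k
    using that assms by (intro exp_le_if_gt_threshold) (auto simp: H_def)
  have \<theta>: "0 < \<theta>" "\<theta> \<le> \<gamma>" "p + \<theta> < 1/2" if "p < 1/2"
    using that assms min.cobounded2[of \<gamma> "(1/2 - p)/2"] by (auto simp: \<theta>_def)
  have slow: "exp (- 2 * real k * (1/2 - (p + \<theta>))\<^sup>2) \<le> \<theta>/2" if "p < 1/2" "real k > H" for k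
    using that \<theta>[OF that(1)] by (intro exp_le_if_gt_threshold) (auto simp: H_def)
  show ?thesis
    by (intro exI[of _ H] allI impI conjI; elim conjE;
        rule fast_disruption slow_disruption[where \<theta> = \<theta>]; use assms fast slow \<theta> in auto)
qed

end
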